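(* (1) If $\Psi \vdash \exists \alpha{:}\kappa.\,A \le^{+} B$ then $\Psi, \alpha{:}\kappa \vdash A \le^{+} B$. (2) If $\Psi \vdash A \le^{-} \forall \beta{:}\kappa.\,B$ then $\Psi, \beta{:}\kappa \vdash A \le^{-} B$.
   Context: Sorts are $\kappa \in \{\mathsf{type}, \mathbb{N}\}$. Index terms/monotypes $\tau, t$ are built from $\mathbf{1}$, universal variables $\alpha$, binary connectives $\tau_1 \oplus \tau_2$ with $\oplus \in \{\to, +, \times\}$ (sort $\mathsf{type}$), and $\mathsf{zero}$, $\mathsf{succ}(t)$ (sort $\mathbb{N}$); $\Psi \vdash t : \kappa$ means $t$ has sort $\kappa$ with its variables declared in $\Psi$. Types are $A, B ::= \mathbf{1} \mid \alpha \mid A \oplus B \mid \forall \alpha{:}\kappa.\,A \mid \exists \alpha{:}\kappa.\,A \mid P \supset A \mid A \wedge P \mid \mathsf{Vec}\ t\ A$ with propositions $P ::= t = t'$. A declarative context $\Psi$ is a list of declarations including universal variables $\alpha:\kappa$ (bound variables are assumed fresh for $\Psi$). A type is positive if headed by $\exists$, negative if headed by $\forall$; nonpos = not positive, nonneg = not negative. Declarative subtyping $\Psi \vdash A \le^{\pm} B$ is inductively defined by: (Refl) if $\Psi \vdash A\ \mathsf{type}$ and $A$ is nonpos and nonneg then $\Psi \vdash A \le^{\pm} A$; ($\forall$L) $\Psi \vdash \tau : \kappa$ and $\Psi \vdash [\tau/\alpha]A \le^- B$ give $\Psi \vdash \forall\alpha{:}\kappa.A \le^- B$; ($\forall$R)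 $\Psi, \beta{:}\kappa \vdash A \le^- B$ gives $\Psi \vdash A \le^- \forall\beta{:}\kappa.B$; ($\exists$L) $\Psi, \alpha{:}\kappa \vdash A \le^+ B$ gives $\Psi \vdash \exists\alpha{:}\kappa.A \le^+ B$; ($\exists$R) $\Psi \vdash \tau:\kappa$ and $\Psi \vdash A \le^+ [\tau/\beta]B$ give $\Psi \vdash A \le^+ \exists\beta{:}\kappa.B$; ($-{+}$) $\Psi \vdash A \le^- B$ with $A,B$ nonpos gives $\Psi \vdash A \le^+ B$; ($+{-}$) $\Psi \vdash A \le^+ B$ with $A,B$ nonneg gives $\Psi \vdash A \le^- B$. *)

theory Defs
  imports Main
begin

type_synonym var = nat

datatype sort = SType | SNat

datatype binop = Arr | Sum | Prod

text \<open>Index terms / monotypes and types share one syntax (as in the paper,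
monotypes are a subset of types; zero/succ are index terms of sort N).\<close>
datatype ty =
    Unit
  | TVar var
  | Bin binop ty ty
  | Zero
  | Succ ty
  | All var sort ty
  | Ex var sort ty
  | Imp prp ty
  | With ty prp
  | Vec ty ty
and prp = Eqn ty ty

datatype decl = UVar var sort

type_synonym ctx = "decl list"

definition dom :: "ctx \<Rightarrow> var set" where
  "dom \<Psi> = {a. \<exists>k. UVar a k \<in> set \<Psi>}"

fun subst :: "ty \<Rightarrow> var \<Rightarrow> ty \<Rightarrow> ty"
and substp :: "ty \<Rightarrow> var \<Rightarrow> prp \<Rightarrow> prp" where
  "subst t a Unit = Unit"
| "subst t a (TVar b) = (if b = a then t else TVar b)"
| "subst t a (Bin op A B) = Bin op (subst t a A) (subst t a B)"
| "subst t a Zero = Zero"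
| "subst t a (Succ A) = Succ (subst t a A)"
| "subst t a (All b k A) = (if b = a then All b k A else All b k (subst t a A))"
| "subst t a (Ex b k A) = (if b = a then Ex b k A else Ex b k (subst t a A))"
| "subst t a (Imp P A) = Imp (substp t a P) (subst t a A)"
| "subst t a (With A P) = With (subst t a A) (substp t a P)"
| "subst t a (Vec s A) = Vec (subst t a s) (subst t a A)"
| "substp t a (Eqn s s') = Eqn (subst t a s) (subst t a s')"

inductive has_sort :: "ctx \<Rightarrow> ty \<Rightarrow> sort \<Rightarrow> bool" where
  S_var: "UVar a k \<in> set \<Psi> \<Longrightarrow> has_sort \<Psi> (TVar a) k"
| S_unit: "has_sort \<Psi> Unit SType"
| S_bin: "has_sort \<Psi> t1 SType \<Longrightarrow> has_sort \<Psi> t2 SType \<Longrightarrow> has_sort \<Psi> (Bin op t1 t2) SType"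
| S_zero: "has_sort \<Psi> Zero SNat"
| S_succ: "has_sort \<Psi> t SNat \<Longrightarrow> has_sort \<Psi> (Succ t) SNat"

inductive wf_prop :: "ctx \<Rightarrow> prp \<Rightarrow> bool"
  and wf_type :: "ctx \<Rightarrow> ty \<Rightarrow> bool" where
  P_eq: "has_sort \<Psi> t SNat \<Longrightarrow> has_sort \<Psi> t' SNat \<Longrightarrow> wf_prop \<Psi> (Eqn t t')"
| T_unit: "wf_type \<Psi> Unit"
| T_var: "UVar a SType \<in> set \<Psi> \<Longrightarrow> wf_type \<Psi> (TVar a)"
| T_bin: "wf_type \<Psi> A \<Longrightarrow> wf_type \<Psi> B \<Longrightarrow> wf_type \<Psi> (Bin op A B)"
| T_all: "a \<notin> dom \<Psi> \<Longrightarrow> wf_type (\<Psi> @ [UVar a k]) A \<Longrightarrow> wf_type \<Psi> (All a k A)"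
| T_ex: "a \<notin> dom \<Psi> \<Longrightarrow> wf_type (\<Psi> @ [UVar a k]) A \<Longrightarrow> wf_type \<Psi> (Ex a k A)"
| T_imp: "wf_prop \<Psi> P \<Longrightarrow> wf_type \<Psi> A \<Longrightarrow> wf_type \<Psi> (Imp P A)"
| T_with: "wf_type \<Psi> A \<Longrightarrow> wf_prop \<Psi> P \<Longrightarrow> wf_type \<Psi> (With A P)"
| T_vec: "has_sort \<Psi> t SNat \<Longrightarrow> wf_type \<Psi> A \<Longrightarrow> wf_type \<Psi> (Vec t A)"

fun positive :: "ty \<Rightarrow> bool" where
  "positive (Ex _ _ _) = True"
| "positive _ = False"

fun negative :: "ty \<Rightarrow> bool" where
  "negative (All _ _ _) = True"
| "negative _ = False"

definition nonpos :: "ty \<Rightarrow> bool" where "nonpos A = (\<not> positive A)"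
definition nonneg :: "ty \<Rightarrow> bool" where "nonneg A = (\<not> negative A)"

datatype pol = Pos | Neg

inductive subty :: "ctx \<Rightarrow> ty \<Rightarrow> pol \<Rightarrow> ty \<Rightarrow> bool" where
  Refl: "wf_type \<Psi> A \<Longrightarrow> nonpos A \<Longrightarrow> nonneg A \<Longrightarrow> subty \<Psi> A p A"
| AllL: "has_sort \<Psi> t k \<Longrightarrow> subty \<Psi> (subst t a A) Neg B \<Longrightarrow> subty \<Psi> (All a k A) Neg B"
| AllR: "b \<notin> dom \<Psi> \<Longrightarrow> subty (\<Psi> @ [UVar b k]) A Neg B \<Longrightarrow> subty \<Psi> A Neg (All b k B)"
| ExL: "a \<notin> dom \<Psi> \<Longrightarrow> subty (\<Psi> @ [UVar a k]) A Pos B \<Longrightarrow> subty \<Psi> (Ex a k A) Pos B"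
| ExR: "has_sort \<Psi> t k \<Longrightarrow> subty \<Psi> A Pos (subst t b B) \<Longrightarrow> subty \<Psi> A Pos (Ex b k B)"
| NegPos: "subty \<Psi> A Neg B \<Longrightarrow> nonpos A \<Longrightarrow> nonpos B \<Longrightarrow> subty \<Psi> A Pos B"
| PosNeg: "subty \<Psi> A Pos B \<Longrightarrow> nonneg A \<Longrightarrow> nonneg B \<Longrightarrow> subty \<Psi> A Neg B"

end

theory Submission
  imports Defs
begin

text \<open>A derivation of \<open>\<exists>\<alpha>:\<kappa>. A \<le>\<^sup>+ B\<close> can only end in (\<exists>L), whose premise is the claim, or
  in (\<exists>R), where the induction hypothesis applies to the premise and the witness \<open>\<tau>\<close>
  stays well-sorted in the extended context; (Refl) and (\<minus>+) are excluded by polarity.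
  The second part is dual.\<close>

lemma has_sort_append: "has_sort \<Psi> t k \<Longrightarrow> has_sort (\<Psi> @ \<Phi>) t k"
  by (induction rule: has_sort.induct) (auto intro: has_sort.intros)

lemma subty_Ex_left_invert:
  assumes "subty \<Psi> (Ex a k A) Pos B"
  shows "subty (\<Psi> @ [UVar a k]) A Pos B"
  using assms
proof (induction \<Psi> "Ex a k A" Pos B rule: subty.induct)
  case (ExR \<Psi> t k' B b)
  then show ?case by (auto intro: subty.ExR has_sort_append)
qed (auto simp: nonpos_def)

lemma subty_All_right_invert:
  assumes "subty \<Psi> A Neg (All b k B)"
  shows "subty (\<Psi> @ [UVar b k]) A Neg B"
  using assms
proof (induction \<Psi> A Neg "All b k B" rule: subty.induct)
  case (AllL \<Psi> t k' a A)
  then show ?case by (auto intro: subty.AllL has_sort_append)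
qed (auto simp: nonneg_def)

theorem mainTheorem2:
  shows "(\<forall>\<Psi> a k A B. a \<notin> dom \<Psi> \<longrightarrow> subty \<Psi> (Ex a k A) Pos B
            \<longrightarrow> subty (\<Psi> @ [UVar a k]) A Pos B)
       \<and> (\<forall>\<Psi> b k A B. b \<notin> dom \<Psi> \<longrightarrow> subty \<Psi> A Neg (All b k B)
            \<longrightarrow> subty (\<Psi> @ [UVar b k]) A Neg B)"
  using subty_Ex_left_invert subty_All_right_invert by blast

end
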